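(* Let $j\in\mathbb{N}$ and $r\in\mathbb{N}_0$. Then \[c_j^{(r)}=\sum_{i=0}^{r}\binom{r}{i} c_{j+i}.\]
   Context: For $j,n\in\mathbb{N}$, $c_j(n)$ is the number of ordered $j$-tuples of integers each $\ge 2$ with product $n$. The associated divisor functions are defined by $c_j^{(0)}=c_j$ and $c_j^{(r)}(n)=\sum_{m\mid n}c_j^{(r-1)}(m)$ for $r,n\in\mathbb{N}$. *)

theory Defs
  imports Main
begin

text \<open>Tuples are represented as lists of length j (entries are naturals, since a product
  of integers \<ge> 2 is positive, entries of an integer tuple \<ge> 2 are naturals).\<close>
definition c :: "nat \<Rightarrow> nat \<Rightarrow> nat" where
  "c j n = card {xs :: nat list. length xs = j \<and> (\<forall>x\<in>set xs. 2 \<le> x) \<and> prod_list xs = n}"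

text \<open>Iterated divisor sums: c_r j n = c_j^{(r)}(n).\<close>
fun c_r :: "nat \<Rightarrow> nat \<Rightarrow> nat \<Rightarrow> nat" where
  "c_r 0 j n = c j n"
| "c_r (Suc r) j n = (\<Sum>m\<in>{m. m dvd n}. c_r r j m)"

end

theory Submission
  imports Defs
begin

text \<open>Splitting off the first entry x of a tuple counted by c (j + 1) n leaves a tuple counted
  by c j m, where m = n div x is a proper divisor of n; hence c (j + 1) n is the sum of c j m over
  the proper divisors m of n. Summing over all divisors therefore gives c j n + c (j + 1) n, so
  each divisor summation turns c_j into c_j + c_(j+1), and r of them produce the binomial
  coefficients by Pascal's rule.\<close>

definition factor_tuples :: "nat \<Rightarrow> nat \<Rightarrow> nat list set" where
  "factor_tuples j n = {xs. length xs = j \<and> (\<forall>x\<in>set xs. 2 \<le> x) \<and> prod_list xs = n}"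

lemma c_eq_card_factor_tuples: "c j n = card (factor_tuples j n)"
  by (simp add: c_def factor_tuples_def)

lemma member_le_prod_list:
  fixes xs :: "nat list"
  assumes "x \<in> set xs" and "0 < prod_list xs"
  shows "x \<le> prod_list xs"
  using assms by (intro dvd_imp_le prod_list_dvd)

lemma finite_factor_tuples:
  assumes "0 < n"
  shows "finite (factor_tuples j n)"
proof (rule finite_subset)
  show "factor_tuples j n \<subseteq> {xs. set xs \<subseteq> {..n} \<and> length xs = j}"
    using assms by (auto simp: factor_tuples_def dest: member_le_prod_list)
  show "finite {xs. set xs \<subseteq> {..n} \<and> length xs = j}"
    by (rule finite_lists_length_eq) simp
qed

lemma factor_tuples_Suc:
  assumes "0 < n"
  shows "factor_tuples (Suc j) n =
    (\<Union>m\<in>{m. m dvd n \<and> m < n}. (#) (n div m) ` factor_tuples j m)"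
proof (intro set_eqI iffI)
  fix xs assume "xs \<in> factor_tuples (Suc j) n"
  then obtain x ys where xs: "xs = x # ys" and ys: "ys \<in> factor_tuples j (prod_list ys)"
    and "2 \<le> x" and n: "n = x * prod_list ys"
    by (cases xs) (auto simp: factor_tuples_def)
  have "0 < prod_list ys"
    using assms n by simp
  then have "prod_list ys < n" and "xs = (n div prod_list ys) # ys"
    using \<open>2 \<le> x\<close> unfolding n xs by simp_all
  moreover have "prod_list ys dvd n"
    using n by simp
  ultimately show "xs \<in> (\<Union>m\<in>{m. m dvd n \<and> m < n}. (#) (n div m) ` factor_tuples j m)"
    using ys by blast
next
  fix xs assume "xs \<in> (\<Union>m\<in>{m. m dvd n \<and> m < n}. (#) (n div m) ` factor_tuples j m)"
  then obtain m k ys where "m < n" and n: "n = m * k" and ys: "ys \<in> factor_tuples j m"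
    and xs: "xs = (n div m) # ys"
    by blast
  have "0 < m" and "k \<noteq> 0" and "k \<noteq> 1"
    using assms \<open>m < n\<close> unfolding n by auto
  then have "n div m = k" and "2 \<le> k"
    unfolding n by simp_all
  with ys show "xs \<in> factor_tuples (Suc j) n"
    unfolding xs n by (simp add: factor_tuples_def)
qed

lemma c_Suc_eq_sum_proper_divisors:
  assumes "0 < n"
  shows "c (Suc j) n = (\<Sum>m | m dvd n \<and> m < n. c j m)"
proof -
  let ?D = "{m. m dvd n \<and> m < n}"
  have divisor_pos: "0 < m" if "m \<in> ?D" for m
    using that assms by (auto intro: Nat.gr0I)
  have "c (Suc j) n = (\<Sum>m\<in>?D. card ((#) (n div m) ` factor_tuples j m))"
    unfolding c_eq_card_factor_tuples factor_tuples_Suc[OF assms]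
    by (rule card_UN_disjoint)
       (auto intro: finite_factor_tuples divisor_pos, auto simp: factor_tuples_def)
  also have "\<dots> = (\<Sum>m\<in>?D. c j m)"
    by (simp add: card_image c_eq_card_factor_tuples)
  finally show ?thesis .
qed

lemma sum_divisors_c:
  assumes "0 < n"
  shows "(\<Sum>m | m dvd n. c j m) = c j n + c (Suc j) n"
proof -
  have "{m. m dvd n} = insert n {m. m dvd n \<and> m < n}"
    using assms by (auto dest: dvd_imp_le)
  then show ?thesis
    by (simp add: c_Suc_eq_sum_proper_divisors[OF assms])
qed

lemma binomial_sum_Pascal:
  fixes a :: "nat \<Rightarrow> 'a::comm_semiring_1"
  shows "(\<Sum>i=0..r. of_nat (r choose i) * a i) + (\<Sum>i=0..r. of_nat (r choose i) * a (Suc i))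
    = (\<Sum>i=0..Suc r. of_nat (Suc r choose i) * a i)"
proof -
  have "(\<Sum>i=0..Suc r. of_nat (Suc r choose i) * a i)
      = a 0 + (\<Sum>i=0..r. of_nat (r choose Suc i) * a (Suc i))
        + (\<Sum>i=0..r. of_nat (r choose i) * a (Suc i))"
    by (simp only: sum.atLeast0_atMost_Suc_shift binomial_Suc_Suc)
       (simp add: sum.distrib algebra_simps)
  also have "a 0 + (\<Sum>i=0..r. of_nat (r choose Suc i) * a (Suc i))
      = (\<Sum>i=0..Suc r. of_nat (r choose i) * a i)"
    by (simp only: sum.atLeast0_atMost_Suc_shift) simp
  also have "\<dots> = (\<Sum>i=0..r. of_nat (r choose i) * a i)"
    by (simp add: binomial_eq_0)
  finally show ?thesis by simp
qed

theorem lemma12: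
  fixes j r n :: nat
  assumes "j \<ge> 1" and "n \<ge> 1"
  shows "c_r r j n = (\<Sum>i=0..r. (r choose i) * c (j + i) n)"
  using assms(2)
proof (induction r arbitrary: n)
  case 0
  then show ?case by simp
next
  case (Suc r)
  have "c_r (Suc r) j n = (\<Sum>m | m dvd n. \<Sum>i=0..r. (r choose i) * c (j + i) m)"
    using Suc.prems by (auto intro!: sum.cong Suc.IH Nat.gr0I)
  also have "\<dots> = (\<Sum>i=0..r. (r choose i) * (\<Sum>m | m dvd n. c (j + i) m))"
    by (subst sum.swap) (simp add: sum_distrib_left)
  also have "\<dots> = (\<Sum>i=0..r. (r choose i) * c (j + i) n)
      + (\<Sum>i=0..r. (r choose i) * c (j + Suc i) n)"
    using Suc.prems by (simp add: sum_divisors_c algebra_simps sum.distrib)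
  also have "\<dots> = (\<Sum>i=0..Suc r. (Suc r choose i) * c (j + i) n)"
    using binomial_sum_Pascal[of r "\<lambda>i. c (j + i) n"] by simp
  finally show ?case .
qed

end
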